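(* There is an absolute constant $\gamma'>0$ such that the following holds. Let $f:X\times Y\to\{0,1\}$, $b>0$, and let $\nu$ be a balanced distribution on $X\times Y$ such that every rectangle $R\subseteq X\times Y$ with $\nu(R)\ge 2^{-b}$ satisfies $\nu(f^{-1}(1)\mid R)\le 3/4$. Let $k\le b$ and let $f_k(x,y)=(f(x_1,y_1),\dots,f(x_k,y_k))$ on $X^k\times Y^k$. Then every rectangle $R\subseteq X^k\times Y^k$ with $\nu^k(R)\ge 2^{-b/2}$ satisfies $\nu^k(\{(x,y)\in R: f_k(x,y)=c\}\mid R)\le 2^{-\gamma' k}$ for every $c\in\{0,1\}^k$ with at least $k/3$ ones.
   Context: A distribution $\nu$ on $X\times Y$ is balanced for $f$ if $\nu(f^{-1}(0))=\nu(f^{-1}(1))=1/2$. Rectangles are product sets; $\nu^k$ is the $k$-fold product distribution on $X^k\times Y^k$. *)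

theory Defs
  imports "HOL-Probability.Probability"
begin

text \<open>Inputs are encoded as natural numbers; X and Y are finite sets of naturals.
  A boolean function value True stands for 1, False for 0.\<close>

definition balanced :: "(nat \<times> nat) pmf \<Rightarrow> (nat \<Rightarrow> nat \<Rightarrow> bool) \<Rightarrow> bool" where
  "balanced \<nu> f \<longleftrightarrow>
     measure_pmf.prob \<nu> {p. \<not> f (fst p) (snd p)} = 1/2 \<and>
     measure_pmf.prob \<nu> {p. f (fst p) (snd p)} = 1/2"

definition cond_prob :: "'c pmf \<Rightarrow> 'c set \<Rightarrow> 'c set \<Rightarrow> real" where
  "cond_prob \<mu> E R = measure_pmf.prob \<mu> (E \<inter> R) / measure_pmf.prob \<mu> R"

text \<open>The k-fold product distribution on X^k \<times> Y^k (tuples as lists of length k).\<close>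
definition pow_pmf :: "nat \<Rightarrow> ('a \<times> 'b) pmf \<Rightarrow> ('a list \<times> 'b list) pmf" where
  "pow_pmf k \<nu> = map_pmf (\<lambda>zs. (map fst zs, map snd zs)) (replicate_pmf k \<nu>)"

definition f_pow :: "('a \<Rightarrow> 'b \<Rightarrow> bool) \<Rightarrow> 'a list \<Rightarrow> 'b list \<Rightarrow> bool list" where
  "f_pow f xs ys = map2 f xs ys"

end

theory Submission
  imports Defs
begin

text \<open>
  The event in_at_ones F c, that f = 1 at every coordinate where c has a one, contains
  {f_k = c}. Its \<nu>^k-measure inside a product rectangle R is estimated one coordinate at a time.
  At a zero of c we condition on the first coordinate, whose slices of R are again product
  rectangles. At a one of c we condition on all other coordinates: the remaining slice is a
  rectangle of X \<times> Y, on which f = 1 has relative mass at most 3/4 up to an additive error 2^-b.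
  Induction gives the bound (3/4)^t \<nu>^k(R) + 2^-b for t ones, so \<nu>^k(R) \<ge> 2^(-b/2) bounds the
  conditional probability by (3/4)^(k/3) + 2^(-k/2), which is exponentially small in k.
\<close>

lemma measure_pmf_prob_bind:
  "measure_pmf.prob (bind_pmf M N) X = (\<integral>x. measure_pmf.prob (N x) X \<partial>M)"
proof -
  have "emeasure (bind_pmf M N) X = (\<integral>\<^sup>+x. emeasure (N x) X \<partial>M)"
    by (rule emeasure_bind_pmf)
  also have "\<dots> = (\<integral>\<^sup>+x. ennreal (measure_pmf.prob (N x) X) \<partial>M)"
    by (simp add: measure_pmf.emeasure_eq_measure)
  also have "\<dots> = ennreal (\<integral>x. measure_pmf.prob (N x) X \<partial>M)"
    by (intro nn_integral_eq_integral measure_pmf.integrable_const_bound[where B=1]) auto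
  finally show ?thesis
    by (simp add: measure_pmf.emeasure_eq_measure integral_nonneg_AE)
qed

lemma integrable_measure_pmf_prob [simp]:
  "integrable (measure_pmf M) (\<lambda>x. measure_pmf.prob (N x) (X x))"
  by (intro measure_pmf.integrable_const_bound[where B=1]) auto

lemma prob_replicate_pmf_Suc_head:
  "measure_pmf.prob (replicate_pmf (Suc k) p) Q =
     (\<integral>z. measure_pmf.prob (replicate_pmf k p) {zs. z # zs \<in> Q} \<partial>p)"
  by (simp add: measure_pmf_prob_bind map_pmf_def[symmetric] vimage_def)

lemma prob_replicate_pmf_Suc_tail:
  "measure_pmf.prob (replicate_pmf (Suc k) p) Q =
     (\<integral>zs. measure_pmf.prob p {z. z # zs \<in> Q} \<partial>replicate_pmf k p)"
proof -
  have "replicate_pmf (Suc k) p = bind_pmf (replicate_pmf k p) (\<lambda>zs. map_pmf (\<lambda>z. z # zs) p)"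
    by (simp add: bind_commute_pmf[of p] map_pmf_def)
  then show ?thesis by (simp add: measure_pmf_prob_bind vimage_def)
qed

lemma prob_pow_pmf:
  "measure_pmf.prob (pow_pmf k \<nu>) S =
     measure_pmf.prob (replicate_pmf k \<nu>) {zs. (map fst zs, map snd zs) \<in> S}"
  by (simp add: pow_pmf_def vimage_def)

definition list_rect :: "'a list set \<Rightarrow> 'b list set \<Rightarrow> ('a \<times> 'b) list set" where
  "list_rect A B = {zs. map fst zs \<in> A \<and> map snd zs \<in> B}"

definition in_at_ones :: "'a set \<Rightarrow> bool list \<Rightarrow> 'a list set" where
  "in_at_ones F c = {zs. list_all2 (\<lambda>b z. b \<longrightarrow> z \<in> F) c zs}"

lemma Cons_in_list_rect_iff:
  "z # zs \<in> list_rect A B \<longleftrightarrow> zs \<in> list_rect {xs. fst z # xs \<in> A} {ys. snd z # ys \<in> B}"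
  "z # zs \<in> list_rect A B \<longleftrightarrow> z \<in> {x. x # map fst zs \<in> A} \<times> {y. y # map snd zs \<in> B}"
  by (auto simp: list_rect_def mem_Times_iff)

lemma Cons_in_at_ones_iff [simp]:
  "z # zs \<in> in_at_ones F (b # c) \<longleftrightarrow> (b \<longrightarrow> z \<in> F) \<and> zs \<in> in_at_ones F c"
  by (simp add: in_at_ones_def)

lemma f_pow_in_at_ones:
  "f_pow f (map fst zs) (map snd zs) = c \<Longrightarrow> zs \<in> in_at_ones {p. f (fst p) (snd p)} c"
  by (induction zs arbitrary: c) (auto simp: f_pow_def in_at_ones_def)

lemma prob_Int_rect_le_of_cond_prob_le:
  fixes \<nu> :: "('a \<times> 'b) pmf"
  assumes supp: "set_pmf \<nu> \<subseteq> X \<times> Y" and "0 < \<epsilon>" "\<rho> \<le> 1"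
    and dense_rect: "\<forall>A B. A \<subseteq> X \<longrightarrow> B \<subseteq> Y \<longrightarrow> measure_pmf.prob \<nu> (A \<times> B) \<ge> \<epsilon> \<longrightarrow>
          cond_prob \<nu> F (A \<times> B) \<le> \<rho>"
  shows "measure_pmf.prob \<nu> (F \<inter> A \<times> B) \<le> \<rho> * measure_pmf.prob \<nu> (A \<times> B) + (1 - \<rho>) * \<epsilon>"
proof -
  let ?P = "measure_pmf.prob \<nu>"
  have restrict: "?P (E \<inter> (A \<inter> X) \<times> (B \<inter> Y)) = ?P (E \<inter> A \<times> B)" for E
    using supp by (intro measure_eq_AE) (auto simp: AE_measure_pmf_iff)
  show ?thesis
  proof (cases "?P (A \<times> B) \<ge> \<epsilon>")
    case True
    then have "cond_prob \<nu> F ((A \<inter> X) \<times> (B \<inter> Y)) \<le> \<rho>"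
      using dense_rect restrict[of UNIV] by auto
    then have "?P (F \<inter> A \<times> B) \<le> \<rho> * ?P (A \<times> B)"
      using True \<open>0 < \<epsilon>\<close> restrict[of UNIV] restrict[of F]
      by (simp add: cond_prob_def divide_le_eq)
    moreover have "0 \<le> (1 - \<rho>) * \<epsilon>"
      using \<open>0 < \<epsilon>\<close> \<open>\<rho> \<le> 1\<close> by simp
    ultimately show ?thesis
      by linarith
  next
    case False
    have "?P (F \<inter> A \<times> B) \<le> ?P (A \<times> B)"
      by (rule measure_pmf.finite_measure_mono) auto
    moreover have "(1 - \<rho>) * ?P (A \<times> B) \<le> (1 - \<rho>) * \<epsilon>"
      using False \<open>\<rho> \<le> 1\<close> by (intro mult_left_mono) auto
    ultimately show ?thesis
      by (simp add: algebra_simps)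
  qed
qed

lemma prob_in_at_ones_list_rect_le:
  fixes \<nu> :: "('a \<times> 'b) pmf"
  assumes rect: "\<And>A B. measure_pmf.prob \<nu> (F \<inter> A \<times> B) \<le> \<rho> * measure_pmf.prob \<nu> (A \<times> B) + (1 - \<rho>) * \<epsilon>"
    and "0 \<le> \<rho>"
  shows "measure_pmf.prob (replicate_pmf (length c) \<nu>) (in_at_ones F c \<inter> list_rect A B) \<le>
     \<rho> ^ length (filter id c) * measure_pmf.prob (replicate_pmf (length c) \<nu>) (list_rect A B)
     + (1 - \<rho> ^ length (filter id c)) * \<epsilon>"
proof (induction c arbitrary: A B)
  case Nil
  then show ?case
    by (simp add: in_at_ones_def indicator_def)
next
  case (Cons b c)
  let ?P = "measure_pmf.prob (replicate_pmf (Suc (length c)) \<nu>)"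
  let ?Q = "measure_pmf.prob (replicate_pmf (length c) \<nu>)"
  let ?E = "\<lambda>b. in_at_ones F (b # c) \<inter> list_rect A B"
  let ?rect = "\<lambda>z. list_rect {xs. fst z # xs \<in> A} {ys. snd z # ys \<in> B}"
  define q where "q = \<rho> ^ length (filter id c)"
  have "?P (?E False) = (\<integral>z. ?Q (in_at_ones F c \<inter> ?rect z) \<partial>\<nu>)"
    unfolding prob_replicate_pmf_Suc_head by (simp add: Cons_in_list_rect_iff(1) Int_def)
  also have "\<dots> \<le> (\<integral>z. q * ?Q (?rect z) + (1 - q) * \<epsilon> \<partial>\<nu>)"
    by (intro integral_mono Cons.IH[folded q_def]) simp_all
  also have "\<dots> = q * ?P (list_rect A B) + (1 - q) * \<epsilon>"
    unfolding prob_replicate_pmf_Suc_head by (simp add: Cons_in_list_rect_iff(1))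
  finally have bound_False: "?P (?E False) \<le> q * ?P (list_rect A B) + (1 - q) * \<epsilon>" .
  show ?case
  proof (cases b)
    case False
    then show ?thesis
      using bound_False by (simp add: q_def id_def)
  next
    case True
    \<comment> \<open>For a fixed tail, the head slice of ?E True is F cut down to the head slice of
      ?E False, which is a rectangle.\<close>
    have slice: "measure_pmf.prob \<nu> {z. z # zs \<in> ?E True}
        \<le> \<rho> * measure_pmf.prob \<nu> {z. z # zs \<in> ?E False} + (1 - \<rho>) * \<epsilon>" for zs
    proof (cases "zs \<in> in_at_ones F c")
      case True
      let ?S = "{x. x # map fst zs \<in> A} \<times> {y. y # map snd zs \<in> B}"
      have "{z. z # zs \<in> ?E True} = F \<inter> ?S" "{z. z # zs \<in> ?E False} = ?S"
        using True by (auto simp: Cons_in_list_rect_iff(2))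
      then show ?thesis
        using rect by simp
    next
      case False
      then show ?thesis
        using rect[of "{}" "{}"] by simp  \<comment> \<open>the empty rectangle gives 0 \<le> (1 - \<rho>) \<epsilon>\<close>
    qed
    have "?P (?E True) \<le> (\<integral>zs. \<rho> * measure_pmf.prob \<nu> {z. z # zs \<in> ?E False} + (1 - \<rho>) * \<epsilon>
        \<partial>replicate_pmf (length c) \<nu>)"
      unfolding prob_replicate_pmf_Suc_tail using slice by (intro integral_mono) auto
    also have "\<dots> = \<rho> * ?P (?E False) + (1 - \<rho>) * \<epsilon>"
      unfolding prob_replicate_pmf_Suc_tail by simp
    also have "\<dots> \<le> \<rho> * (q * ?P (list_rect A B) + (1 - q) * \<epsilon>) + (1 - \<rho>) * \<epsilon>"
      using bound_False \<open>0 \<le> \<rho>\<close> by (intro add_right_mono mult_left_mono)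
    finally show ?thesis
      using True by (simp add: q_def id_def algebra_simps)
  qed
qed

lemma prob_f_pow_eq_Int_rect_le:
  fixes \<nu> :: "('a \<times> 'b) pmf"
  assumes "\<And>A B. measure_pmf.prob \<nu> ({p. f (fst p) (snd p)} \<inter> A \<times> B)
      \<le> \<rho> * measure_pmf.prob \<nu> (A \<times> B) + (1 - \<rho>) * \<epsilon>"
    and "0 \<le> \<rho>" "length c = k"
  shows "measure_pmf.prob (pow_pmf k \<nu>) ({p. f_pow f (fst p) (snd p) = c} \<inter> A \<times> B)
    \<le> \<rho> ^ length (filter id c) * measure_pmf.prob (pow_pmf k \<nu>) (A \<times> B)
       + (1 - \<rho> ^ length (filter id c)) * \<epsilon>"
proof -
  let ?P = "measure_pmf.prob (replicate_pmf k \<nu>)"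
  have "measure_pmf.prob (pow_pmf k \<nu>) ({p. f_pow f (fst p) (snd p) = c} \<inter> A \<times> B)
      \<le> ?P (in_at_ones {p. f (fst p) (snd p)} c \<inter> list_rect A B)"
    unfolding prob_pow_pmf
    by (intro measure_pmf.finite_measure_mono) (auto simp: list_rect_def intro: f_pow_in_at_ones)
  also have "\<dots> \<le> \<rho> ^ length (filter id c) * ?P (list_rect A B) + (1 - \<rho> ^ length (filter id c)) * \<epsilon>"
    using prob_in_at_ones_list_rect_le[OF assms(1,2), of c] \<open>length c = k\<close> by simp
  also have "?P (list_rect A B) = measure_pmf.prob (pow_pmf k \<nu>) (A \<times> B)"
    by (simp add: prob_pow_pmf list_rect_def)
  finally show ?thesis .
qed

lemma cond_prob_le_of_prob_Int_le:
  assumes "measure_pmf.prob \<mu> (E \<inter> R) \<le> q * measure_pmf.prob \<mu> R + (1 - q) * s\<^sup>2"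
    and "s \<le> measure_pmf.prob \<mu> R" "0 < s" "q \<le> 1"
  shows "cond_prob \<mu> E R \<le> q + (1 - q) * s"
proof -
  let ?m = "measure_pmf.prob \<mu> R"
  have "(1 - q) * s\<^sup>2 \<le> (1 - q) * (s * ?m)"
    using assms(2-4) by (intro mult_left_mono) (auto simp: power2_eq_square)
  then have "measure_pmf.prob \<mu> (E \<inter> R) \<le> (q + (1 - q) * s) * ?m"
    using assms(1) by (simp add: algebra_simps)
  then show ?thesis
    using assms(2,3) by (simp add: cond_prob_def pos_divide_le_eq)
qed

lemma two_minus_power_le:
  fixes r :: real
  assumes "0 \<le> r" "r \<le> 1"
  shows "2 - r ^ k \<le> (2 - r) ^ k"
proof (induction k)
  case 0
  then show ?case by simp
next
  case (Suc k)
  have "0 \<le> 2 * (1 - r) * (1 - r ^ k)"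
    using assms by (simp add: power_le_one)
  then have "2 - r ^ Suc k \<le> (2 - r) * (2 - r ^ k)"
    by (simp add: algebra_simps)
  also have "\<dots> \<le> (2 - r) * (2 - r) ^ k"
    using Suc.IH assms by (intro mult_left_mono) auto
  finally show ?case by simp
qed

lemma power_mult_two_minus_power_le:
  fixes r :: real
  assumes "0 \<le> r" "r \<le> 1"
  shows "r ^ k * (2 - r ^ k) \<le> (r * (2 - r)) ^ k"
  using mult_left_mono[OF two_minus_power_le[OF assms, of k], of "r ^ k"] assms
  by (simp add: power_mult_distrib)

lemma add_mult_compl_le:
  fixes q s a :: real
  assumes "0 \<le> q" "q \<le> a" "0 \<le> s" "s \<le> a" "a \<le> 1"
  shows "q + (1 - q) * s \<le> a * (2 - a)"
proof -
  have "(1 - q) * s \<le> (1 - q) * a"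
    using assms by (intro mult_left_mono) auto
  moreover have "(1 - a) * q \<le> (1 - a) * a"
    using assms by (intro mult_left_mono) auto
  ultimately show ?thesis
    by (simp add: algebra_simps)
qed

lemma three_quarters_power_add_mult_compl_le:
  fixes b :: real
  assumes "real k \<le> 3 * real t" "real k \<le> b"
  shows "(3/4) ^ t + (1 - (3/4) ^ t) * 2 powr (-b/2) \<le> (9919/10000) ^ k"
proof -
  \<comment> \<open>r = 0.91 satisfies r^3 \<ge> 3/4 and r^2 \<ge> 1/2, and r (2 - r) = 0.9919.\<close>
  define r :: real where "r = 91/100"
  define s :: real where "s = 2 powr (-b/2)"
  have "(3/4 :: real) ^ t \<le> (r ^ 3) ^ t"
    by (intro power_mono) (simp_all add: r_def power3_eq_cube)
  also have "\<dots> \<le> r ^ k"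
    unfolding power_mult[symmetric] using assms(1) by (intro power_decreasing) (simp_all add: r_def)
  finally have q_le: "(3/4 :: real) ^ t \<le> r ^ k" .
  have "s\<^sup>2 = 2 powr (-b)"
    by (simp add: s_def power2_eq_square flip: powr_add)
  also have "\<dots> \<le> 2 powr (- real k)"
    using assms(2) by simp
  also have "\<dots> = (1/2) ^ k"
    by (simp add: powr_minus_divide powr_realpow power_one_over)
  also have "\<dots> \<le> (r ^ 2) ^ k"
    by (intro power_mono) (simp_all add: r_def power2_eq_square)
  also have "\<dots> = (r ^ k)\<^sup>2"
    by (simp flip: power_mult add: mult.commute)
  finally have s_le: "s \<le> r ^ k"
    by (rule power2_le_imp_le) (simp add: r_def)
  have "(3/4) ^ t + (1 - (3/4) ^ t) * s \<le> r ^ k * (2 - r ^ k)"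
    using q_le s_le by (intro add_mult_compl_le) (simp_all add: r_def s_def power_le_one)
  also have "\<dots> \<le> (r * (2 - r)) ^ k"
    by (rule power_mult_two_minus_power_le) (simp_all add: r_def)
  finally show ?thesis
    by (simp add: r_def s_def)
qed

theorem mainTheorem11:
  shows "\<exists>\<gamma>::real. \<gamma> > 0 \<and>
    (\<forall>(X::nat set) (Y::nat set) (f::nat \<Rightarrow> nat \<Rightarrow> bool) (b::real) (\<nu>::(nat \<times> nat) pmf) (k::nat).
      finite X \<longrightarrow> finite Y \<longrightarrow> set_pmf \<nu> \<subseteq> X \<times> Y \<longrightarrow> b > 0 \<longrightarrow> balanced \<nu> f \<longrightarrow>
      (\<forall>A B. A \<subseteq> X \<longrightarrow> B \<subseteq> Y \<longrightarrow> measure_pmf.prob \<nu> (A \<times> B) \<ge> 2 powr (-b) \<longrightarrow>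
          cond_prob \<nu> {p. f (fst p) (snd p)} (A \<times> B) \<le> 3/4) \<longrightarrow>
      real k \<le> b \<longrightarrow>
      (\<forall>A B. A \<subseteq> {xs. length xs = k \<and> set xs \<subseteq> X} \<longrightarrow> B \<subseteq> {ys. length ys = k \<and> set ys \<subseteq> Y} \<longrightarrow>
          measure_pmf.prob (pow_pmf k \<nu>) (A \<times> B) \<ge> 2 powr (-b/2) \<longrightarrow>
          (\<forall>c::bool list. length c = k \<longrightarrow> real (length (filter id c)) \<ge> real k / 3 \<longrightarrow>
             cond_prob (pow_pmf k \<nu>) {p. f_pow f (fst p) (snd p) = c} (A \<times> B)
               \<le> 2 powr (-\<gamma> * real k))))"
proof (intro exI[of _ "- log 2 (9919/10000)"] conjI allI impI)
  show "0 < - log 2 (9919/10000::real)"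
    by simp
next
  fix X Y :: "nat set" and f b and \<nu> :: "(nat \<times> nat) pmf" and k A B and c :: "bool list"
  assume supp: "set_pmf \<nu> \<subseteq> X \<times> Y"
    and dense_rect: "\<forall>A B. A \<subseteq> X \<longrightarrow> B \<subseteq> Y \<longrightarrow> measure_pmf.prob \<nu> (A \<times> B) \<ge> 2 powr (-b) \<longrightarrow>
          cond_prob \<nu> {p. f (fst p) (snd p)} (A \<times> B) \<le> 3/4"
    and "real k \<le> b" and large: "measure_pmf.prob (pow_pmf k \<nu>) (A \<times> B) \<ge> 2 powr (-b/2)"
    and "length c = k" and "real (length (filter id c)) \<ge> real k / 3"
  define s where "s = 2 powr (-b/2)"
  define q :: real where "q = (3/4) ^ length (filter id c)"
  have "s\<^sup>2 = 2 powr (-b)"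
    by (simp add: s_def power2_eq_square flip: powr_add)
  then have "measure_pmf.prob \<nu> ({p. f (fst p) (snd p)} \<inter> A' \<times> B')
      \<le> 3/4 * measure_pmf.prob \<nu> (A' \<times> B') + (1 - 3/4) * s\<^sup>2" for A' B'
    using prob_Int_rect_le_of_cond_prob_le[OF supp _ _ dense_rect] by simp
  from prob_f_pow_eq_Int_rect_le[OF this _ \<open>length c = k\<close>, folded q_def]
  have "cond_prob (pow_pmf k \<nu>) {p. f_pow f (fst p) (snd p) = c} (A \<times> B) \<le> q + (1 - q) * s"
    using large[folded s_def] by (rule cond_prob_le_of_prob_Int_le) (simp_all add: s_def q_def power_le_one)
  also have "\<dots> \<le> (9919/10000) ^ k"
    unfolding q_def s_def using \<open>length (filter id c) \<ge> k / 3\<close> \<open>real k \<le> b\<close>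
    by (intro three_quarters_power_add_mult_compl_le) simp_all
  also have "\<dots> = 2 powr (- (- log 2 (9919/10000)) * real k)"
    by (simp add: powr_powr[symmetric] powr_realpow)
  finally show "cond_prob (pow_pmf k \<nu>) {p. f_pow f (fst p) (snd p) = c} (A \<times> B)
      \<le> 2 powr (- (- log 2 (9919/10000)) * real k)" .
qed

end
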